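(* If $G$ is a connected $P_4$-free graph and $G\neq K_2$, then $\gamma(G)=\gamma_{\rm cer}(G)$.
   Context: All graphs are finite and simple. A graph is $P_4$-free if it has no induced subgraph isomorphic to the path $P_4$ on four vertices. A set $D\subseteq V_G$ is a dominating set of $G$ if every vertex of $V_G-D$ has a neighbor in $D$; $\gamma(G)$ is the minimum cardinality of a dominating set. A set $D\subseteq V_G$ is a certified dominating set of $G$ if $D$ is a dominating set of $G$ and every vertex of $D$ has either zero or at least two neighbors in $V_G-D$; $\gamma_{\rm cer}(G)$ is the minimum cardinality of a certified dominating set of $G$. *)

theory Defs
  imports Main
begin

definition simple_graph :: "'a set \<Rightarrow> ('a \<Rightarrow> 'a \<Rightarrow> bool) \<Rightarrow> bool" where
  "simple_graph V E \<longleftrightarrow> finite V \<and> (\<forall>x y. E x y \<longrightarrow> x \<in> V \<and> y \<in> V)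
     \<and> (\<forall>x y. E x y \<longrightarrow> E y x) \<and> (\<forall>x. \<not> E x x)"

definition connected_graph :: "'a set \<Rightarrow> ('a \<Rightarrow> 'a \<Rightarrow> bool) \<Rightarrow> bool" where
  "connected_graph V E \<longleftrightarrow> V \<noteq> {} \<and> (\<forall>x\<in>V. \<forall>y\<in>V. (E\<^sup>*\<^sup>*) x y)"

definition is_K2 :: "'a set \<Rightarrow> ('a \<Rightarrow> 'a \<Rightarrow> bool) \<Rightarrow> bool" where
  "is_K2 V E \<longleftrightarrow> (\<exists>u v. u \<noteq> v \<and> V = {u, v} \<and> E u v)"

definition P4_free :: "'a set \<Rightarrow> ('a \<Rightarrow> 'a \<Rightarrow> bool) \<Rightarrow> bool" where
  "P4_free V E \<longleftrightarrow> \<not> (\<exists>a\<in>V. \<exists>b\<in>V. \<exists>c\<in>V. \<exists>d\<in>V. distinct [a, b, c, d]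
      \<and> E a b \<and> E b c \<and> E c d \<and> \<not> E a c \<and> \<not> E a d \<and> \<not> E b d)"

definition dominating_set :: "'a set \<Rightarrow> ('a \<Rightarrow> 'a \<Rightarrow> bool) \<Rightarrow> 'a set \<Rightarrow> bool" where
  "dominating_set V E D \<longleftrightarrow> D \<subseteq> V \<and> (\<forall>v\<in>V - D. \<exists>u\<in>D. E v u)"

definition certified_dominating_set :: "'a set \<Rightarrow> ('a \<Rightarrow> 'a \<Rightarrow> bool) \<Rightarrow> 'a set \<Rightarrow> bool" where
  "certified_dominating_set V E D \<longleftrightarrow> dominating_set V E D \<and>
     (\<forall>v\<in>D. card {u \<in> V - D. E v u} = 0 \<or> card {u \<in> V - D. E v u} \<ge> 2)"

definition domination_number :: "'a set \<Rightarrow> ('a \<Rightarrow> 'a \<Rightarrow> bool) \<Rightarrow> nat" where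
  "domination_number V E = Min (card ` {D. dominating_set V E D})"

definition certified_domination_number :: "'a set \<Rightarrow> ('a \<Rightarrow> 'a \<Rightarrow> bool) \<Rightarrow> nat" where
  "certified_domination_number V E = Min (card ` {D. certified_dominating_set V E D})"

end

theory Submission
  imports Defs
begin

text \<open>A connected \<open>P\<^sub>4\<close>-free graph has diameter at most two, and a neighbour of a vertex \<open>v\<close>
  seeing as many non-neighbours of \<open>v\<close> as possible sees all of them, so \<open>\<gamma> \<le> 2\<close>.
  If some vertex \<open>w\<close> dominates, \<open>{w}\<close> is certified unless \<open>G = K\<^sub>2\<close>. Otherwise a dominating
  pair \<open>{a, b}\<close> is certified unless, say, \<open>a\<close> has a unique neighbour \<open>x\<close> outside the pair;
  then \<open>a\<close> and \<open>b\<close> are adjacent (else \<open>x\<close> would dominate), and \<open>{x, b}\<close> is a certified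
  dominating pair.\<close>

lemma dominating_set_singleton_iff:
  "dominating_set V E {v} \<longleftrightarrow> v \<in> V \<and> (\<forall>w\<in>V - {v}. E w v)"
  unfolding dominating_set_def by auto

lemma certified_dominating_set_vertex_set: "certified_dominating_set V E V"
  unfolding certified_dominating_set_def dominating_set_def by simp

lemma finite_dominating_sets:
  assumes "finite V"
  shows "finite {D. dominating_set V E D}"
  using assms unfolding dominating_set_def by simp

lemma domination_number_le_certified_domination_number:
  assumes "finite V"
  shows "domination_number V E \<le> certified_domination_number V E"
proof -
  have "{D. certified_dominating_set V E D} \<subseteq> {D. dominating_set V E D}"
    unfolding certified_dominating_set_def by blast
  then show ?thesis
    unfolding domination_number_def certified_domination_number_def
    using finite_dominating_sets[OF assms] certified_dominating_set_vertex_set[of V E]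
    by (intro Min_antimono) auto
qed

lemma certified_domination_number_le_domination_number:
  assumes "finite V"
    and smaller: "\<And>D. dominating_set V E D \<Longrightarrow>
      \<exists>C. certified_dominating_set V E C \<and> card C \<le> card D"
  shows "certified_domination_number V E \<le> domination_number V E"
proof -
  have "finite {D. certified_dominating_set V E D}"
    using finite_dominating_sets[OF assms(1)]
    by (rule rev_finite_subset) (auto simp: certified_dominating_set_def)
  then have "\<exists>C. certified_dominating_set V E C \<and> certified_domination_number V E \<le> card D"
    if "dominating_set V E D" for D
    using smaller[OF that] unfolding certified_domination_number_def
    by (meson Min_le dual_order.trans image_eqI mem_Collect_eq finite_imageI)
  then show ?thesis
    unfolding domination_number_def
    using finite_dominating_sets[OF assms(1)] certified_dominating_set_vertex_set[of V E]
    by (subst Min_ge_iff) (auto simp: certified_dominating_set_def)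
qed

locale connected_cograph =
  fixes V :: "'a set" and E :: "'a \<Rightarrow> 'a \<Rightarrow> bool"
  assumes simple: "simple_graph V E"
    and connected: "connected_graph V E"
    and P4_free: "P4_free V E"
begin

lemma finite: "finite V"
  and edge_in_V: "E x y \<Longrightarrow> x \<in> V \<and> y \<in> V"
  and edge_sym: "E x y \<Longrightarrow> E y x"
  and no_loop: "\<not> E x x"
  using simple unfolding simple_graph_def by blast+

lemma edge_commute: "E x y \<longleftrightarrow> E y x"
  using edge_sym by blast

lemma nonempty: "V \<noteq> {}"
  using connected unfolding connected_graph_def by blast

lemma induced_path_chord:
  assumes "E a b" "E b c" "E c d" "\<not> E a c" "\<not> E a d"
  shows "E b d"
proof (rule ccontr)
  assume "\<not> E b d"
  moreover have "distinct [a, b, c, d]"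
    using assms \<open>\<not> E b d\<close> no_loop edge_sym by auto
  ultimately show False
    using P4_free assms edge_in_V unfolding P4_free_def by blast
qed

lemma distance_le_two:
  assumes "v \<in> V" "w \<in> V"
  shows "w = v \<or> E v w \<or> (\<exists>u. E v u \<and> E u w)"
proof -
  have "(E\<^sup>*\<^sup>*) v w"
    using connected assms unfolding connected_graph_def by blast
  then show ?thesis
  proof (induction rule: rtranclp_induct)
    case (step y z)
    show ?case
    proof (cases "z = v \<or> E v z")
      case False
      from step.IH show ?thesis
      proof (elim disjE exE conjE)
        fix u assume "E v u" "E u y"
        then show ?thesis
          using induced_path_chord[of v u y z] step.hyps(2) False edge_sym
          by (cases "E v y") auto
      qed (use step.hyps(2) in auto)
    qed auto
  qed simp
qed

definition non_neighbours :: "'a \<Rightarrow> 'a set" where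
  "non_neighbours v = {m \<in> V. m \<noteq> v \<and> \<not> E v m}"

lemma adjacent_to_non_neighbours_if_maximal:
  assumes vu: "E v u"
    and maximal: "\<And>u'. E v u' \<Longrightarrow>
      card {m \<in> non_neighbours v. E u' m} \<le> card {m \<in> non_neighbours v. E u m}"
    and m': "m' \<in> non_neighbours v"
  shows "E u m'"
proof (rule ccontr)
  assume um': "\<not> E u m'"
  let ?M = "non_neighbours v"
  obtain u' where u': "E v u'" "E u' m'"
    using distance_le_two[of v m'] m' vu edge_in_V unfolding non_neighbours_def by blast
  have "\<exists>m\<in>?M. E u m \<and> \<not> E u' m"
  proof (rule ccontr)
    assume "\<not> ?thesis"
    then have "insert m' {m \<in> ?M. E u m} \<subseteq> {m \<in> ?M. E u' m}"
      using m' u' by blast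
    moreover have "finite ?M"
      using finite unfolding non_neighbours_def by simp
    ultimately have "card (insert m' {m \<in> ?M. E u m}) \<le> card {m \<in> ?M. E u' m}"
      by (intro card_mono) auto
    moreover have "card (insert m' {m \<in> ?M. E u m}) = Suc (card {m \<in> ?M. E u m})"
      using \<open>finite ?M\<close> um' by simp
    ultimately show False
      using maximal[OF u'(1)] by simp
  qed
  then obtain m where m: "m \<in> ?M" "E u m" "\<not> E u' m"
    by blast
  have "\<not> E v m" "\<not> E v m'"
    using m(1) m' unfolding non_neighbours_def by auto
  have "\<not> E m m'"
  proof
    assume "E m m'"
    have "E m v"
      by (rule induced_path_chord[of m' m u v])
        (use \<open>E m m'\<close> m(2) vu um' \<open>\<not> E v m'\<close> in \<open>simp_all add: edge_commute\<close>)
    then show False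
      using \<open>\<not> E v m\<close> by (simp add: edge_commute)
  qed
  show False
  proof (cases "E u u'")
    case True
    have "E u m'"
      by (rule induced_path_chord[of m u u' m'])
        (use True m u' \<open>\<not> E m m'\<close> in \<open>simp_all add: edge_commute\<close>)
    then show False
      using um' by simp
  next
    case False
    have "E u u'"
      by (rule induced_path_chord[of m u v u'])
        (use m u' vu \<open>\<not> E v m\<close> in \<open>simp_all add: edge_commute\<close>)
    then show False
      using False by simp
  qed
qed

lemma dominating_pair_exists:
  assumes "\<forall>w. \<not> dominating_set V E {w}"
  shows "\<exists>a b. a \<noteq> b \<and> dominating_set V E {a, b}"
proof -
  obtain v where v: "v \<in> V"
    using nonempty by blast
  then obtain m' where m': "m' \<in> non_neighbours v"
    using assms edge_sym unfolding dominating_set_singleton_iff non_neighbours_def by blast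
  then obtain u0 where "E v u0"
    using distance_le_two[of v m'] v unfolding non_neighbours_def by blast
  moreover have "card {m \<in> non_neighbours v. E u m} < Suc (card V)" for u
    using finite by (intro le_imp_less_Suc card_mono) (auto simp: non_neighbours_def)
  ultimately obtain u where u: "E v u" and
    "\<And>u'. E v u' \<Longrightarrow>
      card {m \<in> non_neighbours v. E u' m} \<le> card {m \<in> non_neighbours v. E u m}"
    using ex_has_greatest_nat[of "E v" u0 "\<lambda>u. card {m \<in> non_neighbours v. E u m}"]
    by blast
  then have "E u m" if "m \<in> non_neighbours v" for m
    using adjacent_to_non_neighbours_if_maximal that by blast
  then have "dominating_set V E {v, u}"
    using v u edge_in_V edge_sym unfolding dominating_set_def non_neighbours_def by blast
  moreover have "v \<noteq> u"
    using u no_loop by blast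
  ultimately show ?thesis
    by blast
qed

lemma certified_if_dominating_vertex:
  assumes w: "dominating_set V E {w}" and not_K2: "\<not> is_K2 V E"
  shows "certified_dominating_set V E {w}"
proof -
  have wV: "w \<in> V" and all: "\<forall>z\<in>V - {w}. E z w"
    using w unfolding dominating_set_singleton_iff by blast+
  have external: "{u \<in> V - {w}. E w u} = V - {w}"
    using all edge_sym by blast
  have "card (V - {w}) \<noteq> 1"
  proof
    assume "card (V - {w}) = 1"
    then obtain z where z: "V - {w} = {z}"
      by (auto simp: card_1_singleton_iff)
    then have "w \<noteq> z \<and> V = {w, z} \<and> E w z"
      using wV all edge_sym by blast
    then show False
      using not_K2 unfolding is_K2_def by blast
  qed
  then have "card {u \<in> V - {w}. E w u} = 0 \<or> 2 \<le> card {u \<in> V - {w}. E w u}"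
    unfolding external by linarith
  then show ?thesis
    using w unfolding certified_dominating_set_def by simp
qed

lemma adjacent_if_unique_external_neighbour:
  assumes no_dominating_vertex: "\<forall>w. \<not> dominating_set V E {w}"
    and ab: "dominating_set V E {a, b}" "a \<noteq> b"
    and unique: "{u \<in> V - {a, b}. E a u} = {x}"
  shows "E a b"
proof (rule ccontr)
  assume "\<not> E a b"
  have x: "x \<in> V - {a, b}" "E a x"
    using unique by auto
  have abV: "a \<in> V" "b \<in> V"
    using ab unfolding dominating_set_def by auto
  have a_neighbours: "y = b \<or> y = x" if "E a y" for y
    using unique that edge_in_V[OF that] no_loop by blast
  obtain u where "E a u" "E u b"
    using distance_le_two[of a b] abV ab(2) \<open>\<not> E a b\<close> by blast
  then have "E x b"
    using a_neighbours \<open>\<not> E a b\<close> by blast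
  have "E z x" if z: "z \<in> V - {x}" for z
  proof -
    consider "z = a" | "z = b" | "z \<notin> {a, b, x}"
      using z by blast
    then show ?thesis
    proof cases
      case 3
      have "E z b"
        using ab z 3 a_neighbours edge_sym unfolding dominating_set_def by blast
      moreover have "\<not> E a z"
        using a_neighbours 3 by blast
      ultimately have "E x z"
        using induced_path_chord[OF \<open>E a x\<close> \<open>E x b\<close>] \<open>\<not> E a b\<close> edge_sym by blast
      then show ?thesis
        by (rule edge_sym)
    qed (use \<open>E a x\<close> \<open>E x b\<close> in \<open>auto simp: edge_commute\<close>)
  qed
  then show False
    using no_dominating_vertex x unfolding dominating_set_singleton_iff by blast
qed

lemma certified_pair_if_unique_external_neighbour:
  assumes no_dominating_vertex: "\<forall>w. \<not> dominating_set V E {w}"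
    and ab: "dominating_set V E {a, b}" "a \<noteq> b"
    and unique: "{u \<in> V - {a, b}. E a u} = {x}"
  shows "certified_dominating_set V E {x, b} \<and> x \<noteq> b"
proof -
  have x: "x \<in> V" "x \<noteq> a" "x \<noteq> b" and "E a x"
    using unique by auto
  have abV: "a \<in> V" "b \<in> V"
    using ab unfolding dominating_set_def by auto
  have a_neighbours: "y = b \<or> y = x" if "E a y" for y
    using unique that edge_in_V[OF that] no_loop by blast
  have to_b: "E y b" if "y \<in> V" "y \<notin> {a, b, x}" for y
    using ab that a_neighbours edge_sym unfolding dominating_set_def by blast
  have "E a b"
    using adjacent_if_unique_external_neighbour[OF assms] .
  have "\<not> E x b"
  proof
    assume "E x b"
    then have "dominating_set V E {b}"
      using abV \<open>E a b\<close> to_b unfolding dominating_set_singleton_iff by blast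
    then show False
      using no_dominating_vertex by blast
  qed
  have "\<exists>y. y \<in> V \<and> y \<notin> {a, b, x}"
  proof (rule ccontr)
    assume "\<nexists>y. y \<in> V \<and> y \<notin> {a, b, x}"
    then have "dominating_set V E {a}"
      using abV \<open>E a b\<close> \<open>E a x\<close> unfolding dominating_set_singleton_iff
      by (auto simp: edge_commute)
    then show False
      using no_dominating_vertex by blast
  qed
  then obtain y where y: "y \<in> V" "y \<notin> {a, b, x}"
    by blast
  have from_x: "E x z" if "z \<in> V" "z \<notin> {a, b, x}" for z
  proof (rule ccontr)
    assume "\<not> E x z"
    have "E b z"
      using to_b[OF that] edge_sym by blast
    then have "E a z"
      using induced_path_chord[OF edge_sym[OF \<open>E a x\<close>] \<open>E a b\<close>] \<open>\<not> E x b\<close> \<open>\<not> E x z\<close>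
      by blast
    then show False
      using a_neighbours that by blast
  qed
  have external: "{u \<in> V - {x, b}. E x u} = V - {x, b}" "{u \<in> V - {x, b}. E b u} = V - {x, b}"
    using from_x to_b \<open>E a x\<close> \<open>E a b\<close> by (auto simp: edge_commute)
  have "{a, y} \<subseteq> V - {x, b}"
    using abV ab(2) x y by auto
  then have two: "2 \<le> card (V - {x, b})"
    using card_mono[of "V - {x, b}" "{a, y}"] finite y ab(2) by auto
  have "dominating_set V E {x, b}"
    unfolding dominating_set_def using x(1) abV to_b \<open>E a b\<close> by auto
  moreover have "\<forall>v\<in>{x, b}. 2 \<le> card {u \<in> V - {x, b}. E v u}"
    unfolding ball_simps external using two by simp
  ultimately show ?thesis
    unfolding certified_dominating_set_def using x(3) by blast
qed

lemma certified_pair_exists: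
  assumes no_dominating_vertex: "\<forall>w. \<not> dominating_set V E {w}"
    and ab: "dominating_set V E {a, b}" "a \<noteq> b"
  shows "\<exists>C. certified_dominating_set V E C \<and> card C = 2"
proof -
  have swap: "{b, a} = {a, b}"
    by blast
  consider x where "{u \<in> V - {a, b}. E a u} = {x}"
    | x where "{u \<in> V - {a, b}. E b u} = {x}"
    | "card {u \<in> V - {a, b}. E a u} \<noteq> 1" "card {u \<in> V - {a, b}. E b u} \<noteq> 1"
    by (auto simp: card_1_singleton_iff)
  then show ?thesis
  proof cases
    case (1 x)
    then have "certified_dominating_set V E {x, b} \<and> x \<noteq> b"
      by (rule certified_pair_if_unique_external_neighbour[OF no_dominating_vertex ab])
    then show ?thesis
      by (intro exI[of _ "{x, b}"]) simp
  next
    case (2 x)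
    then have "{u \<in> V - {b, a}. E b u} = {x}"
      unfolding swap .
    moreover have "dominating_set V E {b, a}" "b \<noteq> a"
      using ab unfolding swap by auto
    ultimately have "certified_dominating_set V E {x, a} \<and> x \<noteq> a"
      using certified_pair_if_unique_external_neighbour[OF no_dominating_vertex] by blast
    then show ?thesis
      by (intro exI[of _ "{x, a}"]) simp
  next
    case 3
    then have "certified_dominating_set V E {a, b}"
      using ab(1) unfolding certified_dominating_set_def by auto
    then show ?thesis
      using ab(2) by (intro exI[of _ "{a, b}"]) simp
  qed
qed

lemma exists_smaller_certified_dominating_set:
  assumes not_K2: "\<not> is_K2 V E" and D: "dominating_set V E D"
  shows "\<exists>C. certified_dominating_set V E C \<and> card C \<le> card D"
proof -
  have "finite D" "D \<noteq> {}"
    using D finite nonempty finite_subset unfolding dominating_set_def by blast+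
  then have "1 \<le> card D"
    by (simp add: Suc_le_eq card_gt_0_iff)
  show ?thesis
  proof (cases "\<exists>w. dominating_set V E {w}")
    case True
    then show ?thesis
      using certified_if_dominating_vertex[OF _ not_K2] \<open>1 \<le> card D\<close> by fastforce
  next
    case False
    then have "card D \<noteq> 1"
      using D by (auto simp: card_1_singleton_iff)
    then have "2 \<le> card D"
      using \<open>1 \<le> card D\<close> by linarith
    obtain a b where "a \<noteq> b" "dominating_set V E {a, b}"
      using dominating_pair_exists False by blast
    then show ?thesis
      using certified_pair_exists False \<open>2 \<le> card D\<close> by (metis order_refl)
  qed
qed

end

theorem theorem2p7:
  fixes V :: "'a set" and E :: "'a \<Rightarrow> 'a \<Rightarrow> bool"
  assumes "simple_graph V E"
    and "connected_graph V E"
    and "P4_free V E"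
    and "\<not> is_K2 V E"
  shows "domination_number V E = certified_domination_number V E"
proof -
  interpret connected_cograph V E
    using assms(1-3) by unfold_locales
  show ?thesis
    using domination_number_le_certified_domination_number[OF finite]
      certified_domination_number_le_domination_number[OF finite
        exists_smaller_certified_dominating_set[OF assms(4)]]
    by (rule antisym)
qed

end
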